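(* Let $A\subseteq B$ be an admissible extension (under the standing assumptions below). Then for every $\psi\in\mathrm{Min}(A)$ there exists $\mu\in\mathrm{Min}(B)$ such that $\mu\cap\nabla_A=\psi$.
   Context: For an algebra $M$ of a fixed signature: $\mathrm{Con}(M)$ is its congruence lattice with bottom $\Delta_M$ and top $\nabla_M=M^2$. $[\cdot,\cdot]_M$ is the term condition commutator: for $\alpha,\beta,\mu\in\mathrm{Con}(M)$, $C(\alpha,\beta;\mu)$ means that for all $n,k$, every $(n+k)$-ary term $t$, all $(a_i,b_i)\in\alpha$ and $(c_j,d_j)\in\beta$: $(t(\bar a,\bar c),t(\bar a,\bar d))\in\mu$ iff $(t(\bar b,\bar c),t(\bar b,\bar d))\in\mu$; $[\alpha,\beta]_M=\bigcap\{\mu: C(\alpha,\beta;\mu)\}$. A congruence $\phi\neq\nabla_M$ is prime if $[\alpha,\beta]_M\subseteq\phi$ implies $\alpha\subseteq\phi$ or $\beta\subseteq\phi$; $\mathrm{Spec}(M)$ is the set of primes, $\mathrm{Min}(M)$ its minimal elements; $\rho_M(\theta)$ is the intersection of all primes containing $\theta$ ($\nabla_M$ if none); $M$ is semiprime if $\rho_M(\Delta_M)=\Delta_M$. Standing assumptions: $B$ is an algebra, $A$ is a subalgebra of $B$, $A$ and $B$ are semiprime, and the commutators of $A$ and $B$ are commutative and distributive w.r.t. arbitrary joins (i.e. $[\alpha,\beta]=[\beta,\alpha]$ and $[\bigvee_i\alpha_i,\beta]=\bigvee_i[\alpha_i,\beta]$). The extension $A\subseteq B$ is admissible iff $\phi\cap\nabla_A\in\mathrm{Spec}(A)$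 for all $\phi\in\mathrm{Spec}(B)$. *)

theory Defs
  imports Main
begin

text \<open>Algebras of a fixed signature: operation symbols of type 'f with arity ar,
  interpreted by F (the same interpretation for B and its subalgebra A).\<close>

definition is_algebra :: "('f \<Rightarrow> nat) \<Rightarrow> ('f \<Rightarrow> 'a list \<Rightarrow> 'a) \<Rightarrow> 'a set \<Rightarrow> bool" where
  "is_algebra ar F S \<longleftrightarrow>
     (\<forall>f xs. length xs = ar f \<and> set xs \<subseteq> S \<longrightarrow> F f xs \<in> S)"

definition subalgebra :: "('f \<Rightarrow> nat) \<Rightarrow> ('f \<Rightarrow> 'a list \<Rightarrow> 'a) \<Rightarrow> 'a set \<Rightarrow> 'a set \<Rightarrow> bool" where
  "subalgebra ar F A B \<longleftrightarrow> A \<subseteq> B \<and> is_algebra ar F A"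

definition Con :: "('f \<Rightarrow> nat) \<Rightarrow> ('f \<Rightarrow> 'a list \<Rightarrow> 'a) \<Rightarrow> 'a set \<Rightarrow> ('a \<times> 'a) set set" where
  "Con ar F S = {\<theta>. \<theta> \<subseteq> S \<times> S \<and> refl_on S \<theta> \<and> sym \<theta> \<and> trans \<theta> \<and>
     (\<forall>f xs ys. length xs = ar f \<and> length ys = ar f \<and>
        (\<forall>i < ar f. (xs ! i, ys ! i) \<in> \<theta>) \<longrightarrow> (F f xs, F f ys) \<in> \<theta>)}"

datatype 'f trm = Var nat | App 'f "'f trm list"

fun wf_trm :: "('f \<Rightarrow> nat) \<Rightarrow> 'f trm \<Rightarrow> bool" where
  "wf_trm ar (Var i) = True"
| "wf_trm ar (App f ts) = (length ts = ar f \<and> (\<forall>t \<in> set ts. wf_trm ar t))"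

fun vars_trm :: "'f trm \<Rightarrow> nat set" where
  "vars_trm (Var i) = {i}"
| "vars_trm (App f ts) = (\<Union>t \<in> set ts. vars_trm t)"

fun eval_trm :: "('f \<Rightarrow> 'a list \<Rightarrow> 'a) \<Rightarrow> (nat \<Rightarrow> 'a) \<Rightarrow> 'f trm \<Rightarrow> 'a" where
  "eval_trm F \<sigma> (Var i) = \<sigma> i"
| "eval_trm F \<sigma> (App f ts) = F f (map (eval_trm F \<sigma>) ts)"

text \<open>Term condition C(alpha, beta; mu): for every (n+k)-ary term t (variables among
  0..n+k-1, the first n receiving the a/b tuple, the last k the c/d tuple).\<close>
definition TC :: "('f \<Rightarrow> nat) \<Rightarrow> ('f \<Rightarrow> 'a list \<Rightarrow> 'a) \<Rightarrow> 'a set \<Rightarrow>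
    ('a \<times> 'a) set \<Rightarrow> ('a \<times> 'a) set \<Rightarrow> ('a \<times> 'a) set \<Rightarrow> bool" where
  "TC ar F S \<alpha> \<beta> \<mu> \<longleftrightarrow>
    (\<forall>n k t a b c d.
       wf_trm ar t \<and> vars_trm t \<subseteq> {..<n+k} \<and>
       (\<forall>i<n. (a i, b i) \<in> \<alpha>) \<and> (\<forall>j<k. (c j, d j) \<in> \<beta>) \<longrightarrow>
       (let ev = (\<lambda>x y. eval_trm F (\<lambda>i. if i < n then x i else y (i - n)) t) in
         ((ev a c, ev a d) \<in> \<mu> \<longleftrightarrow> (ev b c, ev b d) \<in> \<mu>)))"

definition comm :: "('f \<Rightarrow> nat) \<Rightarrow> ('f \<Rightarrow> 'a list \<Rightarrow> 'a) \<Rightarrow> 'a set \<Rightarrow>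
    ('a \<times> 'a) set \<Rightarrow> ('a \<times> 'a) set \<Rightarrow> ('a \<times> 'a) set" where
  "comm ar F S \<alpha> \<beta> = \<Inter>{\<mu> \<in> Con ar F S. TC ar F S \<alpha> \<beta> \<mu>}"

definition Con_Sup :: "('f \<Rightarrow> nat) \<Rightarrow> ('f \<Rightarrow> 'a list \<Rightarrow> 'a) \<Rightarrow> 'a set \<Rightarrow>
    ('a \<times> 'a) set set \<Rightarrow> ('a \<times> 'a) set" where
  "Con_Sup ar F S X = \<Inter>{\<theta> \<in> Con ar F S. \<Union>X \<subseteq> \<theta>}"

definition comm_commutative :: "('f \<Rightarrow> nat) \<Rightarrow> ('f \<Rightarrow> 'a list \<Rightarrow> 'a) \<Rightarrow> 'a set \<Rightarrow> bool" where
  "comm_commutative ar F S \<longleftrightarrow>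
    (\<forall>\<alpha> \<in> Con ar F S. \<forall>\<beta> \<in> Con ar F S. comm ar F S \<alpha> \<beta> = comm ar F S \<beta> \<alpha>)"

definition comm_join_distributive :: "('f \<Rightarrow> nat) \<Rightarrow> ('f \<Rightarrow> 'a list \<Rightarrow> 'a) \<Rightarrow> 'a set \<Rightarrow> bool" where
  "comm_join_distributive ar F S \<longleftrightarrow>
    (\<forall>X \<subseteq> Con ar F S. \<forall>\<beta> \<in> Con ar F S.
       comm ar F S (Con_Sup ar F S X) \<beta> = Con_Sup ar F S ((\<lambda>\<alpha>. comm ar F S \<alpha> \<beta>) ` X))"

definition prime_con :: "('f \<Rightarrow> nat) \<Rightarrow> ('f \<Rightarrow> 'a list \<Rightarrow> 'a) \<Rightarrow> 'a set \<Rightarrow> ('a \<times> 'a) set \<Rightarrow> bool" where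
  "prime_con ar F S \<phi> \<longleftrightarrow> \<phi> \<in> Con ar F S \<and> \<phi> \<noteq> S \<times> S \<and>
    (\<forall>\<alpha> \<in> Con ar F S. \<forall>\<beta> \<in> Con ar F S.
       comm ar F S \<alpha> \<beta> \<subseteq> \<phi> \<longrightarrow> \<alpha> \<subseteq> \<phi> \<or> \<beta> \<subseteq> \<phi>)"

definition Spec :: "('f \<Rightarrow> nat) \<Rightarrow> ('f \<Rightarrow> 'a list \<Rightarrow> 'a) \<Rightarrow> 'a set \<Rightarrow> ('a \<times> 'a) set set" where
  "Spec ar F S = {\<phi>. prime_con ar F S \<phi>}"

definition Min_Spec :: "('f \<Rightarrow> nat) \<Rightarrow> ('f \<Rightarrow> 'a list \<Rightarrow> 'a) \<Rightarrow> 'a set \<Rightarrow> ('a \<times> 'a) set set" where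
  "Min_Spec ar F S = {\<phi> \<in> Spec ar F S. \<forall>\<psi> \<in> Spec ar F S. \<psi> \<subseteq> \<phi> \<longrightarrow> \<psi> = \<phi>}"

definition rad :: "('f \<Rightarrow> nat) \<Rightarrow> ('f \<Rightarrow> 'a list \<Rightarrow> 'a) \<Rightarrow> 'a set \<Rightarrow> ('a \<times> 'a) set \<Rightarrow> ('a \<times> 'a) set" where
  "rad ar F S \<theta> = (if {\<phi> \<in> Spec ar F S. \<theta> \<subseteq> \<phi>} = {} then S \<times> S
                     else \<Inter>{\<phi> \<in> Spec ar F S. \<theta> \<subseteq> \<phi>})"

definition semiprime :: "('f \<Rightarrow> nat) \<Rightarrow> ('f \<Rightarrow> 'a list \<Rightarrow> 'a) \<Rightarrow> 'a set \<Rightarrow> bool" where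
  "semiprime ar F S \<longleftrightarrow> rad ar F S (Id_on S) = Id_on S"

definition admissible :: "('f \<Rightarrow> nat) \<Rightarrow> ('f \<Rightarrow> 'a list \<Rightarrow> 'a) \<Rightarrow> 'a set \<Rightarrow> 'a set \<Rightarrow> bool" where
  "admissible ar F A B \<longleftrightarrow> (\<forall>\<phi> \<in> Spec ar F B. \<phi> \<inter> (A \<times> A) \<in> Spec ar F A)"

end

(* Let \<psi> be a minimal prime of A. By Zorn's lemma there is a congruence \<theta> of B maximal among
   those whose restriction to A lies below \<psi>; commutativity and join-distributivity of the
   commutator of B make \<theta> prime. Intersections of chains of primes are prime, so Zorn's lemma
   again gives a minimal prime \<mu> of B below \<theta>. By admissibility \<mu> restricted to A is a prime
   of A below \<psi>, hence equal to \<psi> by minimality. *)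

theory Submission
  imports Defs
begin

lemma ConI:
  assumes "\<theta> \<subseteq> S \<times> S" "refl_on S \<theta>" "sym \<theta>" "trans \<theta>"
    "\<And>f xs ys. length xs = ar f \<Longrightarrow> length ys = ar f \<Longrightarrow>
        (\<forall>i < ar f. (xs ! i, ys ! i) \<in> \<theta>) \<Longrightarrow> (F f xs, F f ys) \<in> \<theta>"
  shows "\<theta> \<in> Con ar F S"
  using assms unfolding Con_def by blast

lemma ConD:
  assumes "\<theta> \<in> Con ar F S"
  shows "\<theta> \<subseteq> S \<times> S" "refl_on S \<theta>" "sym \<theta>" "trans \<theta>"
    "\<And>f xs ys. length xs = ar f \<Longrightarrow> length ys = ar f \<Longrightarrow>
        (\<forall>i < ar f. (xs ! i, ys ! i) \<in> \<theta>) \<Longrightarrow> (F f xs, F f ys) \<in> \<theta>"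
  using assms unfolding Con_def by blast+

lemma Con_refl: "\<theta> \<in> Con ar F S \<Longrightarrow> x \<in> S \<Longrightarrow> (x, x) \<in> \<theta>"
  using ConD(2) refl_onD by metis

lemma Con_full:
  assumes "is_algebra ar F S"
  shows "S \<times> S \<in> Con ar F S"
proof (rule ConI)
  fix f xs ys assume h: "length xs = ar f" "length ys = ar f" "\<forall>i < ar f. (xs ! i, ys ! i) \<in> S \<times> S"
  have "set xs \<subseteq> S" "set ys \<subseteq> S"
    using h by (auto simp: in_set_conv_nth)
  with assms h show "(F f xs, F f ys) \<in> S \<times> S" unfolding is_algebra_def by auto
qed (auto simp: refl_on_def sym_def trans_def)

lemma Con_Id_on:
  assumes "is_algebra ar F S"
  shows "Id_on S \<in> Con ar F S"
proof (rule ConI)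
  fix f xs ys assume h: "length xs = ar f" "length ys = ar f" "\<forall>i < ar f. (xs ! i, ys ! i) \<in> Id_on S"
  have "xs = ys" using h by (intro nth_equalityI) auto
  moreover have "set xs \<subseteq> S" using h by (auto simp: in_set_conv_nth)
  ultimately show "(F f xs, F f ys) \<in> Id_on S" using assms h unfolding is_algebra_def by auto
qed (auto simp: refl_on_def sym_def trans_def)

lemma Con_Inter:
  assumes "X \<noteq> {}" "X \<subseteq> Con ar F S"
  shows "\<Inter>X \<in> Con ar F S"
proof (rule ConI)
  have C: "\<And>\<theta>. \<theta> \<in> X \<Longrightarrow> \<theta> \<in> Con ar F S" using assms by auto
  obtain \<theta> where "\<theta> \<in> X" using assms by auto
  then show "\<Inter>X \<subseteq> S \<times> S" using ConD(1)[OF C] by blast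
  show "refl_on S (\<Inter>X)"
    using \<open>\<theta> \<in> X\<close> ConD(1)[OF C] Con_refl[OF C] unfolding refl_on_def by blast
  show "sym (\<Inter>X)" using ConD(3)[OF C] by (meson InterD InterI symD symI)
  show "trans (\<Inter>X)" using ConD(4)[OF C] by (meson InterD InterI transD transI)
  fix f xs ys assume "length xs = ar f" "length ys = ar f" "\<forall>i < ar f. (xs ! i, ys ! i) \<in> \<Inter>X"
  then show "(F f xs, F f ys) \<in> \<Inter>X" using ConD(5)[OF C] by blast
qed

text \<open>Every finite set of pairs in the union of a chain lies in a single member of the chain;
  this is all the congruence axioms need, since each mentions only finitely many pairs.\<close>

lemma Con_Union_chain:
  assumes "X \<noteq> {}" "subset.chain (Con ar F S) X"
  shows "\<Union>X \<in> Con ar F S"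
proof -
  have C: "\<And>\<theta>. \<theta> \<in> X \<Longrightarrow> \<theta> \<in> Con ar F S"
    using assms(2) by (auto simp: subset_chain_def)
  have member: "\<exists>\<theta>\<in>X. P \<subseteq> \<theta>" if "finite P" "P \<subseteq> \<Union>X" for P
    using finite_subset_Union_chain[OF that assms] by metis
  show ?thesis
  proof (rule ConI)
    obtain \<theta> where "\<theta> \<in> X" using assms by auto
    then show "\<Union>X \<subseteq> S \<times> S" "refl_on S (\<Union>X)"
      using ConD(1)[OF C] Con_refl[OF C] unfolding refl_on_def by blast+
    show "sym (\<Union>X)" using ConD(3)[OF C] by (meson UnionE UnionI symD symI)
    show "trans (\<Union>X)"
    proof (rule transI)
      fix a b c assume "(a, b) \<in> \<Union>X" "(b, c) \<in> \<Union>X"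
      then obtain \<theta> where "\<theta> \<in> X" "{(a, b), (b, c)} \<subseteq> \<theta>" using member[of "{(a, b), (b, c)}"] by auto
      then show "(a, c) \<in> \<Union>X" using ConD(4)[OF C] by (meson UnionI insert_subset transD)
    qed
    fix f xs ys assume h: "length xs = ar f" "length ys = ar f" "\<forall>i < ar f. (xs ! i, ys ! i) \<in> \<Union>X"
    obtain \<theta> where "\<theta> \<in> X" "(\<lambda>i. (xs ! i, ys ! i)) ` {..<ar f} \<subseteq> \<theta>"
      using member[of "(\<lambda>i. (xs ! i, ys ! i)) ` {..<ar f}"] h(3) by auto
    then show "(F f xs, F f ys) \<in> \<Union>X" using ConD(5)[OF C h(1,2)] by blast
  qed
qed

lemma Con_restrict:
  assumes "subalgebra ar F A B" "\<mu> \<in> Con ar F B"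
  shows "\<mu> \<inter> (A \<times> A) \<in> Con ar F A"
proof (rule ConI)
  have "A \<subseteq> B" and alg: "is_algebra ar F A" using assms(1) unfolding subalgebra_def by auto
  then show "refl_on A (\<mu> \<inter> (A \<times> A))" using Con_refl[OF assms(2)] unfolding refl_on_def by blast
  show "sym (\<mu> \<inter> (A \<times> A))" using ConD(3)[OF assms(2)] unfolding sym_def by blast
  show "trans (\<mu> \<inter> (A \<times> A))" using ConD(4)[OF assms(2)] unfolding trans_def by blast
  fix f xs ys assume h: "length xs = ar f" "length ys = ar f" "\<forall>i < ar f. (xs ! i, ys ! i) \<in> \<mu> \<inter> (A \<times> A)"
  have "set xs \<subseteq> A" "set ys \<subseteq> A" using h by (auto simp: in_set_conv_nth)
  with alg h have "F f xs \<in> A" "F f ys \<in> A" unfolding is_algebra_def by auto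
  moreover have "(F f xs, F f ys) \<in> \<mu>" using ConD(5)[OF assms(2) h(1,2)] h(3) by blast
  ultimately show "(F f xs, F f ys) \<in> \<mu> \<inter> (A \<times> A)" by blast
qed blast

lemma eval_trm_cong:
  assumes "\<theta> \<in> Con ar F S"
  shows "wf_trm ar t \<Longrightarrow> \<forall>i\<in>vars_trm t. (\<sigma> i, \<tau> i) \<in> \<theta> \<Longrightarrow>
     (eval_trm F \<sigma> t, eval_trm F \<tau> t) \<in> \<theta>"
proof (induction t)
  case (App f ts)
  then have "\<forall>i < ar f. (map (eval_trm F \<sigma>) ts ! i, map (eval_trm F \<tau>) ts ! i) \<in> \<theta>"
    by auto
  then show ?case using ConD(5)[OF assms] App.prems by simp
qed simp

lemma split_assignment_rel:
  assumes "vars_trm t \<subseteq> {..<n+k}" "\<forall>i<n. (x i, x' i) \<in> R" "\<forall>j<k. (y j, y' j) \<in> R"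
  shows "\<forall>i\<in>vars_trm t. ((if i < n then x i else y (i - n)), (if i < n then x' i else y' (i - n))) \<in> R"
  using assms by auto

lemma eval_split_closed:
  assumes "is_algebra ar F S" "wf_trm ar t" "vars_trm t \<subseteq> {..<n+k}"
    "\<forall>i<n. x i \<in> S" "\<forall>j<k. y j \<in> S"
  shows "eval_trm F (\<lambda>i. if i < n then x i else y (i - n)) t \<in> S"
  using eval_trm_cong[OF Con_Id_on[OF assms(1)] assms(2)
      split_assignment_rel[OF assms(3), of x x "Id_on S" y y]] assms(4,5) by auto

lemma comm_le_left:
  assumes "\<alpha> \<in> Con ar F S" "\<beta> \<in> Con ar F S"
  shows "comm ar F S \<alpha> \<beta> \<subseteq> \<alpha>"
proof -
  have "TC ar F S \<alpha> \<beta> \<alpha>"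
    unfolding TC_def Let_def
  proof (intro allI impI)
    fix n k t a b c d
    assume h: "wf_trm ar t \<and> vars_trm t \<subseteq> {..<n+k} \<and> (\<forall>i<n. (a i, b i) \<in> \<alpha>) \<and> (\<forall>j<k. (c j, d j) \<in> \<beta>)"
    define ev where "ev x y = eval_trm F (\<lambda>i. if i < n then x i else y (i - n)) t" for x y
    have "(ev a y, ev b y) \<in> \<alpha>" if "\<forall>j<k. (y j, y j) \<in> \<alpha>" for y
      unfolding ev_def using h that by (intro eval_trm_cong[OF assms(1)] split_assignment_rel) auto
    moreover have "\<forall>j<k. (c j, c j) \<in> \<alpha> \<and> (d j, d j) \<in> \<alpha>"
      using h ConD(1)[OF assms(2)] Con_refl[OF assms(1)] by blast
    ultimately have "(ev a c, ev b c) \<in> \<alpha>" "(ev a d, ev b d) \<in> \<alpha>" by auto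
    with ConD(3,4)[OF assms(1)]
    show "((ev a c, ev a d) \<in> \<alpha>) = ((ev b c, ev b d) \<in> \<alpha>)" by (meson symD transD)
  qed
  with assms(1) show ?thesis unfolding comm_def by blast
qed

lemma TC_restrict:
  assumes "subalgebra ar F A B" "TC ar F B \<alpha> \<beta> \<mu>"
  shows "TC ar F A (\<alpha> \<inter> (A \<times> A)) (\<beta> \<inter> (A \<times> A)) (\<mu> \<inter> (A \<times> A))"
  unfolding TC_def Let_def
proof (intro allI impI)
  fix n k t a b c d
  assume h: "wf_trm ar t \<and> vars_trm t \<subseteq> {..<n+k} \<and>
    (\<forall>i<n. (a i, b i) \<in> \<alpha> \<inter> (A \<times> A)) \<and> (\<forall>j<k. (c j, d j) \<in> \<beta> \<inter> (A \<times> A))"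
  define ev where "ev x y = eval_trm F (\<lambda>i. if i < n then x i else y (i - n)) t" for x y
  have "is_algebra ar F A" using assms(1) unfolding subalgebra_def by blast
  then have closed: "ev x y \<in> A" if "\<forall>i<n. x i \<in> A" "\<forall>j<k. y j \<in> A" for x y
    unfolding ev_def using h that by (intro eval_split_closed) auto
  have "\<forall>i<n. a i \<in> A" "\<forall>i<n. b i \<in> A" "\<forall>j<k. c j \<in> A" "\<forall>j<k. d j \<in> A"
    using h by blast+
  then have "ev a c \<in> A" "ev a d \<in> A" "ev b c \<in> A" "ev b d \<in> A" by (simp_all add: closed)
  moreover have "(ev a c, ev a d) \<in> \<mu> \<longleftrightarrow> (ev b c, ev b d) \<in> \<mu>"
    using assms(2) h unfolding TC_def ev_def Let_def by blast
  ultimately show "((ev a c, ev a d) \<in> \<mu> \<inter> (A \<times> A)) = ((ev b c, ev b d) \<in> \<mu> \<inter> (A \<times> A))"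
    by blast
qed

lemma comm_restrict:
  assumes "subalgebra ar F A B" "\<alpha> \<in> Con ar F B" "\<beta> \<in> Con ar F B"
  shows "comm ar F A (\<alpha> \<inter> (A \<times> A)) (\<beta> \<inter> (A \<times> A)) \<subseteq> comm ar F B \<alpha> \<beta> \<inter> (A \<times> A)"
proof -
  have "comm ar F A (\<alpha> \<inter> (A \<times> A)) (\<beta> \<inter> (A \<times> A)) \<subseteq> \<alpha> \<inter> (A \<times> A)"
    using comm_le_left[OF Con_restrict[OF assms(1,2)] Con_restrict[OF assms(1,3)]] by blast
  moreover have "comm ar F A (\<alpha> \<inter> (A \<times> A)) (\<beta> \<inter> (A \<times> A)) \<subseteq> \<mu>"
    if "\<mu> \<in> Con ar F B" "TC ar F B \<alpha> \<beta> \<mu>" for \<mu>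
    using Con_restrict[OF assms(1) that(1)] TC_restrict[OF assms(1) that(2)]
    unfolding comm_def by blast
  ultimately show ?thesis unfolding comm_def by blast
qed

lemma Con_Sup_least:
  assumes "\<theta> \<in> Con ar F S" "\<Union>X \<subseteq> \<theta>"
  shows "Con_Sup ar F S X \<subseteq> \<theta>"
  using assms unfolding Con_Sup_def by blast

lemma Con_Sup_upper: "\<Union>X \<subseteq> Con_Sup ar F S X"
  unfolding Con_Sup_def by blast

lemma Con_Sup_in_Con:
  assumes "is_algebra ar F S" "X \<subseteq> Con ar F S"
  shows "Con_Sup ar F S X \<in> Con ar F S"
proof -
  have "\<Union>X \<subseteq> S \<times> S" using assms(2) ConD(1) by blast
  with Con_full[OF assms(1)] show ?thesis
    unfolding Con_Sup_def by (intro Con_Inter) auto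
qed

lemma comm_join_distributiveD:
  assumes "comm_join_distributive ar F S" "X \<subseteq> Con ar F S" "\<beta> \<in> Con ar F S"
  shows "comm ar F S (Con_Sup ar F S X) \<beta> = Con_Sup ar F S ((\<lambda>\<alpha>. comm ar F S \<alpha> \<beta>) ` X)"
  using assms unfolding comm_join_distributive_def by blast

lemma comm_commutativeD:
  assumes "comm_commutative ar F S" "\<alpha> \<in> Con ar F S" "\<beta> \<in> Con ar F S"
  shows "comm ar F S \<alpha> \<beta> = comm ar F S \<beta> \<alpha>"
  using assms unfolding comm_commutative_def by blast

lemma comm_Con_Sup_le:
  assumes "is_algebra ar F S" "comm_commutative ar F S" "comm_join_distributive ar F S"
    and \<theta>: "\<theta> \<in> Con ar F S" and \<alpha>: "\<alpha> \<in> Con ar F S" and \<beta>: "\<beta> \<in> Con ar F S"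
    and "comm ar F S \<alpha> \<beta> \<subseteq> \<theta>"
  shows "comm ar F S (Con_Sup ar F S {\<theta>, \<alpha>}) (Con_Sup ar F S {\<theta>, \<beta>}) \<subseteq> \<theta>"
proof -
  have sup_left: "comm ar F S (Con_Sup ar F S {\<theta>, \<gamma>}) \<delta> \<subseteq> \<theta>"
    if \<gamma>: "\<gamma> \<in> Con ar F S" and \<delta>: "\<delta> \<in> Con ar F S" and "comm ar F S \<gamma> \<delta> \<subseteq> \<theta>" for \<gamma> \<delta>
  proof -
    have "{\<theta>, \<gamma>} \<subseteq> Con ar F S" using \<theta> \<gamma> by blast
    have "comm ar F S (Con_Sup ar F S {\<theta>, \<gamma>}) \<delta>
        = Con_Sup ar F S {comm ar F S \<theta> \<delta>, comm ar F S \<gamma> \<delta>}"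
      using comm_join_distributiveD[OF assms(3) \<open>{\<theta>, \<gamma>} \<subseteq> Con ar F S\<close> \<delta>] by simp
    also have "\<dots> \<subseteq> \<theta>"
      using comm_le_left[OF \<theta> \<delta>] that(3) by (simp add: Con_Sup_least[OF \<theta>])
    finally show ?thesis .
  qed
  have \<theta>\<beta>: "Con_Sup ar F S {\<theta>, \<beta>} \<in> Con ar F S"
    using Con_Sup_in_Con[OF assms(1)] \<theta> \<beta> by simp
  have "comm ar F S \<alpha> (Con_Sup ar F S {\<theta>, \<beta>}) = comm ar F S (Con_Sup ar F S {\<theta>, \<beta>}) \<alpha>"
    by (rule comm_commutativeD[OF assms(2) \<alpha> \<theta>\<beta>])
  also have "\<dots> \<subseteq> \<theta>"
    using assms(7) comm_commutativeD[OF assms(2) \<beta> \<alpha>] by (intro sup_left[OF \<beta> \<alpha>]) simp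
  finally show ?thesis by (rule sup_left[OF \<alpha> \<theta>\<beta>])
qed

lemma exists_maximal_Con_restrict_le:
  assumes "is_algebra ar F B" "subalgebra ar F A B" "\<psi> \<in> Con ar F A"
  shows "\<exists>\<theta> \<in> Con ar F B. \<theta> \<inter> (A \<times> A) \<subseteq> \<psi> \<and>
    (\<forall>\<theta>' \<in> Con ar F B. \<theta>' \<inter> (A \<times> A) \<subseteq> \<psi> \<longrightarrow> \<theta> \<subseteq> \<theta>' \<longrightarrow> \<theta>' \<subseteq> \<theta>)"
proof -
  let ?P = "{\<theta> \<in> Con ar F B. \<theta> \<inter> (A \<times> A) \<subseteq> \<psi>}"
  have "Id_on A \<subseteq> \<psi>" using Con_refl[OF assms(3)] by auto
  then have "Id_on B \<in> ?P" using Con_Id_on[OF assms(1)] by auto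
  then have nonempty: "?P \<noteq> {}" by blast
  have chain: "\<Union>C \<in> ?P" if "C \<noteq> {}" "subset.chain ?P C" for C
  proof -
    have "subset.chain (Con ar F B) C"
      using that(2) by (auto simp: subset_chain_def)
    then have "\<Union>C \<in> Con ar F B" by (rule Con_Union_chain[OF that(1)])
    moreover have "\<Union>C \<inter> (A \<times> A) \<subseteq> \<psi>" using that(2) by (auto simp: subset_chain_def)
    ultimately show ?thesis by blast
  qed
  have "\<exists>\<theta>\<in>?P. \<forall>\<theta>'\<in>?P. \<theta> \<subseteq> \<theta>' \<longrightarrow> \<theta>' = \<theta>"
    by (rule subset_Zorn_nonempty[OF nonempty chain])
  then obtain \<theta> where \<theta>: "\<theta> \<in> ?P" and max: "\<forall>\<theta>'\<in>?P. \<theta> \<subseteq> \<theta>' \<longrightarrow> \<theta>' = \<theta>" ..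
  show ?thesis
  proof (intro bexI[of _ \<theta>] conjI ballI impI)
    fix \<theta>' assume "\<theta>' \<in> Con ar F B" "\<theta>' \<inter> (A \<times> A) \<subseteq> \<psi>" "\<theta> \<subseteq> \<theta>'"
    then have "\<theta>' = \<theta>" by (intro max[rule_format]) simp_all
    then show "\<theta>' \<subseteq> \<theta>" by (rule equalityD1)
  qed (use \<theta> in simp_all)
qed

text \<open>If \<alpha> and \<beta> both escape \<theta>, maximality makes the joins \<theta> \<or> \<alpha> and \<theta> \<or> \<beta> restrict
  beyond \<psi>, while their commutator stays below \<theta>; this contradicts primeness of \<psi>.\<close>

lemma maximal_Con_restrict_le_prime:
  assumes "is_algebra ar F B" "subalgebra ar F A B"
    "comm_commutative ar F B" "comm_join_distributive ar F B"
    and \<psi>: "prime_con ar F A \<psi>"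
    and \<theta>: "\<theta> \<in> Con ar F B" "\<theta> \<inter> (A \<times> A) \<subseteq> \<psi>"
    and maximal: "\<forall>\<theta>' \<in> Con ar F B. \<theta>' \<inter> (A \<times> A) \<subseteq> \<psi> \<longrightarrow> \<theta> \<subseteq> \<theta>' \<longrightarrow> \<theta>' \<subseteq> \<theta>"
  shows "prime_con ar F B \<theta>"
  unfolding prime_con_def
proof (intro conjI ballI impI)
  have \<psi>_Con: "\<psi> \<in> Con ar F A" and "\<psi> \<noteq> A \<times> A"
    and \<psi>_prime: "\<And>\<alpha> \<beta>. \<alpha> \<in> Con ar F A \<Longrightarrow> \<beta> \<in> Con ar F A \<Longrightarrow> comm ar F A \<alpha> \<beta> \<subseteq> \<psi> \<Longrightarrow> \<alpha> \<subseteq> \<psi> \<or> \<beta> \<subseteq> \<psi>"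
    using \<psi> unfolding prime_con_def by blast+
  moreover have "A \<subseteq> B" using assms(2) unfolding subalgebra_def by blast
  ultimately show "\<theta> \<noteq> B \<times> B" using \<theta>(2) ConD(1)[OF \<psi>_Con] by blast
  fix \<alpha> \<beta> assume \<alpha>: "\<alpha> \<in> Con ar F B" and \<beta>: "\<beta> \<in> Con ar F B"
    and comm_le: "comm ar F B \<alpha> \<beta> \<subseteq> \<theta>"
  have escapes: "\<gamma> \<subseteq> \<theta>"
    if "\<gamma> \<in> Con ar F B" and restr_le: "Con_Sup ar F B {\<theta>, \<gamma>} \<inter> (A \<times> A) \<subseteq> \<psi>" for \<gamma>
  proof -
    have upper: "\<theta> \<subseteq> Con_Sup ar F B {\<theta>, \<gamma>}" "\<gamma> \<subseteq> Con_Sup ar F B {\<theta>, \<gamma>}"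
      using Con_Sup_upper[of "{\<theta>, \<gamma>}" ar F B] by auto
    have "Con_Sup ar F B {\<theta>, \<gamma>} \<in> Con ar F B"
      using Con_Sup_in_Con[OF assms(1)] \<theta>(1) that(1) by simp
    then have "Con_Sup ar F B {\<theta>, \<gamma>} \<subseteq> \<theta>" using restr_le upper(1) maximal by blast
    then show "\<gamma> \<subseteq> \<theta>" using upper(2) by (rule order_trans[rotated])
  qed
  let ?J\<alpha> = "Con_Sup ar F B {\<theta>, \<alpha>} \<inter> (A \<times> A)" and ?J\<beta> = "Con_Sup ar F B {\<theta>, \<beta>} \<inter> (A \<times> A)"
  have J_Con: "?J\<alpha> \<in> Con ar F A" "?J\<beta> \<in> Con ar F A"
    using Con_restrict[OF assms(2)] Con_Sup_in_Con[OF assms(1)] \<theta>(1) \<alpha> \<beta> by auto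
  have "comm ar F A ?J\<alpha> ?J\<beta> \<subseteq> comm ar F B (Con_Sup ar F B {\<theta>, \<alpha>}) (Con_Sup ar F B {\<theta>, \<beta>}) \<inter> (A \<times> A)"
    using comm_restrict[OF assms(2)] Con_Sup_in_Con[OF assms(1)] \<theta>(1) \<alpha> \<beta> by simp
  also have "\<dots> \<subseteq> \<psi>"
    using comm_Con_Sup_le[OF assms(1,3,4) \<theta>(1) \<alpha> \<beta> comm_le] \<theta>(2) by blast
  finally have "?J\<alpha> \<subseteq> \<psi> \<or> ?J\<beta> \<subseteq> \<psi>" by (rule \<psi>_prime[OF J_Con])
  then show "\<alpha> \<subseteq> \<theta> \<or> \<beta> \<subseteq> \<theta>" using escapes \<alpha> \<beta> by blast
qed (fact \<theta>(1))

lemma exists_prime_restrict_le: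
  assumes "is_algebra ar F B" "subalgebra ar F A B"
    "comm_commutative ar F B" "comm_join_distributive ar F B" "prime_con ar F A \<psi>"
  obtains \<theta> where "prime_con ar F B \<theta>" "\<theta> \<inter> (A \<times> A) \<subseteq> \<psi>"
proof -
  have \<psi>: "\<psi> \<in> Con ar F A" using assms(5) unfolding prime_con_def by blast
  obtain \<theta> where \<theta>: "\<theta> \<in> Con ar F B" "\<theta> \<inter> (A \<times> A) \<subseteq> \<psi>"
    "\<forall>\<theta>' \<in> Con ar F B. \<theta>' \<inter> (A \<times> A) \<subseteq> \<psi> \<longrightarrow> \<theta> \<subseteq> \<theta>' \<longrightarrow> \<theta>' \<subseteq> \<theta>"
    using exists_maximal_Con_restrict_le[OF assms(1,2) \<psi>] by blast
  then have "prime_con ar F B \<theta>" by (rule maximal_Con_restrict_le_prime[OF assms])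
  then show thesis using \<theta>(2) by (rule that)
qed

lemma prime_con_Inter_chain:
  assumes "C \<noteq> {}" "subset.chain (Spec ar F S) C"
  shows "prime_con ar F S (\<Inter>C)"
  unfolding prime_con_def
proof (intro conjI ballI impI)
  have prime: "prime_con ar F S \<phi>" if "\<phi> \<in> C" for \<phi>
    using assms(2) that unfolding subset_chain_def Spec_def by blast
  then show "\<Inter>C \<in> Con ar F S" using Con_Inter[OF assms(1)] unfolding prime_con_def by blast
  obtain \<phi> where \<phi>: "\<phi> \<in> C" using assms(1) by blast
  then have "\<phi> \<noteq> S \<times> S" "\<phi> \<subseteq> S \<times> S"
    using prime ConD(1) unfolding prime_con_def by blast+
  moreover have "\<Inter>C \<subseteq> \<phi>" using \<phi> by (rule Inter_lower)
  ultimately show "\<Inter>C \<noteq> S \<times> S" by blast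
  fix \<alpha> \<beta> assume "\<alpha> \<in> Con ar F S" "\<beta> \<in> Con ar F S" "comm ar F S \<alpha> \<beta> \<subseteq> \<Inter>C"
  then have one_below: "\<alpha> \<subseteq> \<phi> \<or> \<beta> \<subseteq> \<phi>" if "\<phi> \<in> C" for \<phi>
    using prime[OF that] that unfolding prime_con_def by blast
  show "\<alpha> \<subseteq> \<Inter>C \<or> \<beta> \<subseteq> \<Inter>C"
  proof (rule ccontr)
    assume "\<not> (\<alpha> \<subseteq> \<Inter>C \<or> \<beta> \<subseteq> \<Inter>C)"
    then obtain \<phi> \<phi>' where \<phi>: "\<phi> \<in> C" "\<not> \<alpha> \<subseteq> \<phi>" and \<phi>': "\<phi>' \<in> C" "\<not> \<beta> \<subseteq> \<phi>'" by blast
    have "\<phi> \<subseteq> \<phi>' \<or> \<phi>' \<subseteq> \<phi>" using assms(2) \<phi>(1) \<phi>'(1) unfolding subset_chain_def by blast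
    then show False using one_below[OF \<phi>(1)] one_below[OF \<phi>'(1)] \<phi>(2) \<phi>'(2) by blast
  qed
qed

lemma exists_Min_Spec_le:
  assumes "prime_con ar F S \<theta>"
  shows "\<exists>\<mu> \<in> Min_Spec ar F S. \<mu> \<subseteq> \<theta>"
proof -
  let ?Q = "{\<phi> \<in> Spec ar F S. \<phi> \<subseteq> \<theta>}"
  have "\<exists>\<mu> \<in> ?Q. \<forall>\<phi> \<in> ?Q. \<phi> \<subseteq> \<mu> \<longrightarrow> \<phi> = \<mu>"
  proof (rule predicate_Zorn)
    show "partial_order_on ?Q (relation_of (\<lambda>x y. y \<subseteq> x) ?Q)"
      by (rule partial_order_on_relation_ofI) auto
    fix C assume C: "C \<in> Chains (relation_of (\<lambda>x y. y \<subseteq> x) ?Q)"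
    show "\<exists>u \<in> ?Q. \<forall>\<phi> \<in> C. u \<subseteq> \<phi>"
    proof (cases "C = {}")
      case True
      have "\<theta> \<in> ?Q" using assms unfolding Spec_def by simp
      with True show ?thesis by blast
    next
      case False
      have CQ: "C \<subseteq> ?Q" by (rule Chains_relation_of[OF C])
      moreover have "\<forall>\<phi>\<in>C. \<forall>\<phi>'\<in>C. \<phi> \<subseteq> \<phi>' \<or> \<phi>' \<subseteq> \<phi>"
        using C unfolding Chains_def relation_of_def by blast
      ultimately have "subset.chain (Spec ar F S) C" unfolding subset_chain_def by blast
      then have "prime_con ar F S (\<Inter>C)" by (rule prime_con_Inter_chain[OF False])
      moreover obtain \<phi> where "\<phi> \<in> C" using False by blast
      then have "\<Inter>C \<subseteq> \<theta>" using CQ by blast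
      ultimately show ?thesis unfolding Spec_def by blast
    qed
  qed
  then obtain \<mu> where \<mu>: "\<mu> \<in> ?Q" and min: "\<forall>\<phi> \<in> ?Q. \<phi> \<subseteq> \<mu> \<longrightarrow> \<phi> = \<mu>" ..
  have "\<mu> \<in> Min_Spec ar F S"
    unfolding Min_Spec_def
  proof (intro CollectI conjI ballI impI)
    fix \<phi> assume "\<phi> \<in> Spec ar F S" "\<phi> \<subseteq> \<mu>"
    with \<mu> show "\<phi> = \<mu>" by (intro min[rule_format]) auto
  qed (use \<mu> in simp)
  with \<mu> show ?thesis by blast
qed

theorem mainTheorem14:
  fixes ar :: "'f \<Rightarrow> nat" and F :: "'f \<Rightarrow> 'a list \<Rightarrow> 'a" and A B :: "'a set"
  assumes "is_algebra ar F B"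
    and "subalgebra ar F A B"
    and "semiprime ar F A" and "semiprime ar F B"
    and "comm_commutative ar F A" and "comm_commutative ar F B"
    and "comm_join_distributive ar F A" and "comm_join_distributive ar F B"
    and "admissible ar F A B"
  shows "\<forall>\<psi> \<in> Min_Spec ar F A. \<exists>\<mu> \<in> Min_Spec ar F B. \<mu> \<inter> (A \<times> A) = \<psi>"
proof
  fix \<psi> assume \<psi>: "\<psi> \<in> Min_Spec ar F A"
  then have "prime_con ar F A \<psi>" unfolding Min_Spec_def Spec_def by blast
  then obtain \<theta> where \<theta>: "prime_con ar F B \<theta>" "\<theta> \<inter> (A \<times> A) \<subseteq> \<psi>"
    using exists_prime_restrict_le[OF assms(1,2,6,8)] by blast
  obtain \<mu> where \<mu>: "\<mu> \<in> Min_Spec ar F B" "\<mu> \<subseteq> \<theta>"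
    using exists_Min_Spec_le[OF \<theta>(1)] by blast
  have "\<mu> \<inter> (A \<times> A) \<in> Spec ar F A"
    using assms(9) \<mu>(1) unfolding admissible_def Min_Spec_def by blast
  moreover have "\<mu> \<inter> (A \<times> A) \<subseteq> \<psi>" using \<mu>(2) \<theta>(2) by blast
  ultimately have "\<mu> \<inter> (A \<times> A) = \<psi>" using \<psi> unfolding Min_Spec_def by blast
  with \<mu>(1) show "\<exists>\<mu> \<in> Min_Spec ar F B. \<mu> \<inter> (A \<times> A) = \<psi>" by blast
qed

end
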